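(* Let $n,m\ge 5$ be integers with $m\equiv 2\pmod 4$ and $n\equiv 2\pmod 4$. Then $\gamma_p(C_n\times C_m)\le\frac{(n+2)(m+2)}{4}-6$.
   Context: All graphs are finite, simple and undirected. $C_n$ denotes the cycle of order $n$ and $G\times H$ the Cartesian product of graphs. For a graph $G$ without isolated vertices, a set $D\subseteq V(G)$ is a paired dominating set if every vertex outside $D$ has a neighbour in $D$ and the induced subgraph $G[D]$ has a perfect matching; $\gamma_p(G)$ is the minimum size of a paired dominating set. *)

theory Defs
  imports Complex_Main
begin

text \<open>A finite simple graph is given by a vertex set V and a symmetric,
irreflexive adjacency relation adj (only its restriction to V matters).\<close>

definition dominating :: "'a set \<Rightarrow> ('a \<Rightarrow> 'a \<Rightarrow> bool) \<Rightarrow> 'a set \<Rightarrow> bool" where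
  "dominating V adj D \<longleftrightarrow> D \<subseteq> V \<and> (\<forall>v \<in> V - D. \<exists>u \<in> D. adj v u)"

definition has_perfect_matching :: "('a \<Rightarrow> 'a \<Rightarrow> bool) \<Rightarrow> 'a set \<Rightarrow> bool" where
  "has_perfect_matching adj D \<longleftrightarrow>
     (\<exists>M. (\<forall>e \<in> M. \<exists>u v. e = {u, v} \<and> u \<in> D \<and> v \<in> D \<and> u \<noteq> v \<and> adj u v)
        \<and> (\<forall>e1 \<in> M. \<forall>e2 \<in> M. e1 \<noteq> e2 \<longrightarrow> e1 \<inter> e2 = {})
        \<and> \<Union>M = D)"

definition paired_dominating :: "'a set \<Rightarrow> ('a \<Rightarrow> 'a \<Rightarrow> bool) \<Rightarrow> 'a set \<Rightarrow> bool" where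
  "paired_dominating V adj D \<longleftrightarrow> dominating V adj D \<and> has_perfect_matching adj D"

definition gamma_p :: "'a set \<Rightarrow> ('a \<Rightarrow> 'a \<Rightarrow> bool) \<Rightarrow> nat" where
  "gamma_p V adj = (LEAST k. \<exists>D. paired_dominating V adj D \<and> card D = k)"

definition cycle_adj :: "nat \<Rightarrow> nat \<Rightarrow> nat \<Rightarrow> bool" where
  "cycle_adj n i j \<longleftrightarrow> i < n \<and> j < n \<and> (j = (i + 1) mod n \<or> i = (j + 1) mod n)"

definition cart_adj :: "('a \<Rightarrow> 'a \<Rightarrow> bool) \<Rightarrow> ('b \<Rightarrow> 'b \<Rightarrow> bool) \<Rightarrow> 'a \<times> 'b \<Rightarrow> 'a \<times> 'b \<Rightarrow> bool" where
  "cart_adj adj1 adj2 x y \<longleftrightarrow>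
     (fst x = fst y \<and> adj2 (snd x) (snd y)) \<or> (snd x = snd y \<and> adj1 (fst x) (fst y))"

end

theory Submission
  imports Defs
begin

text \<open>Write $n = 4a + 2$ and $m = 4b + 2$. Fill every column of $C_n \times C_m$ with vertical
dominoes $\{r, r + 1\}$ placed every four rows, starting in row 1, 3 or 0 according to the column
index mod 4; columns $\equiv 2 \pmod 4$ and column 0 stay empty, and columns $4b$, $4b + 1$ are
adjusted to close up the torus. Every vertex is then dominated inside its column or by the same row
of a neighbouring column, the dominoes themselves are the perfect matching, and there are
$2ab + 2a + 2b - 1$ of them, i.e. $(n + 2)(m + 2)/4 - 6$ vertices.\<close>

lemma gamma_p_le_card:
  assumes "paired_dominating V adj D"
  shows "gamma_p V adj \<le> card D"
  unfolding gamma_p_def using assms by (intro Least_le) blast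

definition dominated_by :: "('a \<Rightarrow> 'a \<Rightarrow> bool) \<Rightarrow> 'a set \<Rightarrow> 'a \<Rightarrow> bool" where
  "dominated_by adj D v \<longleftrightarrow> v \<in> D \<or> (\<exists>u \<in> D. adj v u)"

lemma dominated_by_self: "v \<in> D \<Longrightarrow> dominated_by adj D v"
  unfolding dominated_by_def by blast

lemma dominated_by_neighbour: "adj v u \<Longrightarrow> u \<in> D \<Longrightarrow> dominated_by adj D v"
  unfolding dominated_by_def by blast

lemma dominatingI:
  assumes "D \<subseteq> V" and "\<And>v. v \<in> V \<Longrightarrow> dominated_by adj D v"
  shows "dominating V adj D"
  using assms unfolding dominating_def dominated_by_def by blast

definition perfect_matching :: "('a \<Rightarrow> 'a \<Rightarrow> bool) \<Rightarrow> 'a set \<Rightarrow> 'a set set \<Rightarrow> bool" where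
  "perfect_matching adj D M \<longleftrightarrow>
     (\<forall>e \<in> M. \<exists>u v. e = {u, v} \<and> u \<in> D \<and> v \<in> D \<and> u \<noteq> v \<and> adj u v)
     \<and> (\<forall>e1 \<in> M. \<forall>e2 \<in> M. e1 \<noteq> e2 \<longrightarrow> e1 \<inter> e2 = {}) \<and> \<Union>M = D"

lemma has_perfect_matching_iff: "has_perfect_matching adj D \<longleftrightarrow> (\<exists>M. perfect_matching adj D M)"
  unfolding has_perfect_matching_def perfect_matching_def ..

lemma perfect_matching_image:
  assumes M: "perfect_matching adj D M" and "inj f" and adj': "\<And>u v. adj u v \<Longrightarrow> adj' (f u) (f v)"
  shows "perfect_matching adj' (f ` D) (image f ` M)"
  unfolding perfect_matching_def
proof (intro conjI ballI impI)
  fix e assume "e \<in> image f ` M"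
  then obtain e0 where "e0 \<in> M" "e = f ` e0" by blast
  with M obtain u v where "e0 = {u, v}" "u \<in> D" "v \<in> D" "u \<noteq> v" "adj u v"
    unfolding perfect_matching_def by meson
  with \<open>e = f ` e0\<close> \<open>inj f\<close> adj' show "\<exists>u v. e = {u, v} \<and> u \<in> f ` D \<and> v \<in> f ` D \<and> u \<noteq> v \<and> adj' u v"
    by (intro exI[of _ "f u"] exI[of _ "f v"]) (auto dest: injD)
next
  fix e1 e2 assume "e1 \<in> image f ` M" "e2 \<in> image f ` M" "e1 \<noteq> e2"
  then obtain f1 f2 where "f1 \<in> M" "f2 \<in> M" "e1 = f ` f1" "e2 = f ` f2" "f1 \<noteq> f2" by blast
  with M \<open>inj f\<close> show "e1 \<inter> e2 = {}"
    unfolding perfect_matching_def by (simp add: image_Int[symmetric])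
next
  show "\<Union>(image f ` M) = f ` D"
    using M unfolding perfect_matching_def by (metis image_Union)
qed

lemma perfect_matchingD:
  assumes "perfect_matching adj D M"
  shows perfect_matching_edge: "e \<in> M \<Longrightarrow> \<exists>u v. e = {u, v} \<and> u \<in> D \<and> v \<in> D \<and> u \<noteq> v \<and> adj u v"
    and perfect_matching_disjoint: "e1 \<in> M \<Longrightarrow> e2 \<in> M \<Longrightarrow> e1 \<noteq> e2 \<Longrightarrow> e1 \<inter> e2 = {}"
    and perfect_matching_Union: "\<Union>M = D"
  using assms unfolding perfect_matching_def by blast+

lemma perfect_matching_UN:
  assumes M: "\<And>y. y \<in> Y \<Longrightarrow> perfect_matching adj (D y) (M y)"
    and disjoint: "\<And>y y'. y \<in> Y \<Longrightarrow> y' \<in> Y \<Longrightarrow> y \<noteq> y' \<Longrightarrow> D y \<inter> D y' = {}"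
  shows "perfect_matching adj (\<Union>y\<in>Y. D y) (\<Union>y\<in>Y. M y)"
  unfolding perfect_matching_def
proof (intro conjI ballI impI)
  fix e assume "e \<in> (\<Union>y\<in>Y. M y)"
  then obtain y where y: "y \<in> Y" "e \<in> M y" by blast
  then obtain u v where "e = {u, v}" "u \<in> D y" "v \<in> D y" "u \<noteq> v" "adj u v"
    using perfect_matching_edge[OF M] by meson
  with y show "\<exists>u v. e = {u, v} \<and> u \<in> (\<Union>y\<in>Y. D y) \<and> v \<in> (\<Union>y\<in>Y. D y) \<and> u \<noteq> v \<and> adj u v"
    by blast
next
  fix e1 e2 assume "e1 \<in> (\<Union>y\<in>Y. M y)" "e2 \<in> (\<Union>y\<in>Y. M y)" "e1 \<noteq> e2"
  then obtain y1 y2 where y: "y1 \<in> Y" "y2 \<in> Y" and e: "e1 \<in> M y1" "e2 \<in> M y2" by blast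
  show "e1 \<inter> e2 = {}"
  proof (cases "y1 = y2")
    case True
    with y e \<open>e1 \<noteq> e2\<close> show ?thesis using perfect_matching_disjoint[OF M] by simp
  next
    case False
    have "e1 \<subseteq> D y1" "e2 \<subseteq> D y2"
      using e perfect_matching_Union[OF M[OF y(1)]] perfect_matching_Union[OF M[OF y(2)]] by blast+
    with disjoint[OF y False] show ?thesis by blast
  qed
next
  have "\<Union>(\<Union>y\<in>Y. M y) = (\<Union>y\<in>Y. \<Union>(M y))" by blast
  also have "\<dots> = (\<Union>y\<in>Y. D y)" using perfect_matching_Union[OF M] by simp
  finally show "\<Union>(\<Union>y\<in>Y. M y) = (\<Union>y\<in>Y. D y)" .
qed

definition column_set :: "'b set \<Rightarrow> ('b \<Rightarrow> 'a set) \<Rightarrow> ('a \<times> 'b) set" where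
  "column_set Y C = {(x, y). y \<in> Y \<and> x \<in> C y}"

lemma column_set_eq_UN: "column_set Y C = (\<Union>y\<in>Y. (\<lambda>x. (x, y)) ` C y)"
  unfolding column_set_def by auto

lemma card_column_set_le:
  assumes "finite Y"
  shows "card (column_set Y C) \<le> (\<Sum>y\<in>Y. card (C y))"
proof -
  have "card (column_set Y C) \<le> (\<Sum>y\<in>Y. card ((\<lambda>x. (x, y)) ` C y))"
    unfolding column_set_eq_UN by (rule card_UN_le[OF assms])
  also have "\<dots> = (\<Sum>y\<in>Y. card (C y))"
    by (simp add: card_image inj_on_def)
  finally show ?thesis .
qed

lemma dominated_by_column_set:
  assumes "y \<in> Y"
    and "dominated_by adj1 (C y) x \<or> (\<exists>y' \<in> Y. adj2 y y' \<and> x \<in> C y')"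
  shows "dominated_by (cart_adj adj1 adj2) (column_set Y C) (x, y)"
  using assms unfolding dominated_by_def column_set_def cart_adj_def by auto

lemma has_perfect_matching_column_set:
  assumes "\<And>y. y \<in> Y \<Longrightarrow> has_perfect_matching adj1 (C y)"
  shows "has_perfect_matching (cart_adj adj1 adj2) (column_set Y C)"
proof -
  obtain M where M: "\<And>y. y \<in> Y \<Longrightarrow> perfect_matching adj1 (C y) (M y)"
    using assms bchoice[of Y "\<lambda>y M. perfect_matching adj1 (C y) M"]
    unfolding has_perfect_matching_iff by blast
  have "perfect_matching (cart_adj adj1 adj2) ((\<lambda>x. (x, y)) ` C y) (image (\<lambda>x. (x, y)) ` M y)"
    if "y \<in> Y" for y
    using M[OF that] by (rule perfect_matching_image) (auto simp: inj_def cart_adj_def)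
  then have "perfect_matching (cart_adj adj1 adj2) (column_set Y C) (\<Union>y\<in>Y. image (\<lambda>x. (x, y)) ` M y)"
    unfolding column_set_eq_UN by (rule perfect_matching_UN) auto
  then show ?thesis unfolding has_perfect_matching_iff ..
qed


lemma cycle_adj_Suc: "Suc i < n \<Longrightarrow> cycle_adj n i (Suc i)"
  unfolding cycle_adj_def by simp

lemma cycle_adj_Suc_left: "Suc i < n \<Longrightarrow> cycle_adj n (Suc i) i"
  unfolding cycle_adj_def by simp

lemma cycle_adj_sym: "cycle_adj n i j \<Longrightarrow> cycle_adj n j i"
  unfolding cycle_adj_def by blast

lemma cycle_adj_last_first: "0 < n \<Longrightarrow> cycle_adj n (n - 1) 0"
  unfolding cycle_adj_def by simp

lemma cycle_adj_mod_Suc: "2 \<le> n \<Longrightarrow> cycle_adj n (x mod n) (Suc x mod n)"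
  unfolding cycle_adj_def by (simp add: mod_Suc_eq)

lemma mod_neq_if_close:
  fixes x y n :: nat
  assumes "x < y" "y < x + n"
  shows "x mod n \<noteq> y mod n"
proof
  assume "x mod n = y mod n"
  then have "n dvd y - x" using assms(1) by (simp add: mod_eq_dvd_iff_nat[symmetric])
  moreover have "0 < y - x" "y - x < n" using assms by auto
  ultimately show False using nat_dvd_not_less by blast
qed

lemma mod_4_cases:
  fixes n :: nat
  obtains q where "n = 4 * q" | q where "n = 4 * q + 1" | q where "n = 4 * q + 2" | q where "n = 4 * q + 3"
proof -
  have n: "n = 4 * (n div 4) + n mod 4" by simp
  consider "n mod 4 = 0" | "n mod 4 = 1" | "n mod 4 = 2" | "n mod 4 = 3" by atomize_elim presburger
  then show ?thesis
  proof cases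
    case 1
    with n have "n = 4 * (n div 4)" by simp
    then show ?thesis by (rule that(1))
  next
    case 2
    with n have "n = 4 * (n div 4) + 1" by simp
    then show ?thesis by (rule that(2))
  next
    case 3
    with n have "n = 4 * (n div 4) + 2" by simp
    then show ?thesis by (rule that(3))
  next
    case 4
    with n have "n = 4 * (n div 4) + 3" by simp
    then show ?thesis by (rule that(4))
  qed
qed

lemma mod_4_diff_lt_2:
  fixes s d i :: nat
  assumes "i = s + d" "i mod 4 = s mod 4 \<or> i mod 4 = (s + 1) mod 4"
  shows "d mod 4 < 2"
proof (cases "i mod 4 = s mod 4")
  case True
  then have "4 dvd d" using mod_eq_dvd_iff_nat[of s i 4] assms(1) by simp
  then show ?thesis by simp
next
  case False
  with assms(2) have "i mod 4 = (s + 1) mod 4" by simp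
  moreover have "s + 1 \<le> i" using False assms(1) by (cases d) auto
  ultimately have "4 dvd d - 1" using mod_eq_dvd_iff_nat[of "s + 1" i 4] assms(1) by simp
  then obtain q where "d - 1 = 4 * q" by (elim dvdE)
  moreover have "d \<noteq> 0" using False assms(1) by (cases d) auto
  ultimately have "d = 4 * q + 1" by simp
  then show ?thesis by simp
qed

definition domino :: "nat \<Rightarrow> nat \<Rightarrow> nat set" where
  "domino n x = {x mod n, Suc x mod n}"

definition domino_run :: "nat \<Rightarrow> nat \<Rightarrow> nat \<Rightarrow> nat set" where
  "domino_run n s k = (\<Union>t<k. domino n (s + 4 * t))"

lemma domino_run_subset: "0 < n \<Longrightarrow> domino_run n s k \<subseteq> {0..<n}"
  unfolding domino_run_def domino_def by auto

lemma card_domino_run_le: "card (domino_run n s k) \<le> 2 * k"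
proof -
  have "card (domino_run n s k) \<le> (\<Sum>t<k. card (domino n (s + 4 * t)))"
    unfolding domino_run_def by (rule card_UN_le) simp
  also have "\<dots> \<le> (\<Sum>t<k. 2)"
    by (intro sum_mono) (simp add: domino_def card_insert_le_m1)
  finally show ?thesis by simp
qed

lemma domino_run_memI:
  assumes "t < k" "e < 2"
  shows "(s + 4 * t + e) mod n \<in> domino_run n s k"
  using assms unfolding domino_run_def domino_def
  by (auto simp: less_2_cases_iff)

lemma domino_run_memI_mod:
  assumes "i < n" "s \<le> i" "i < s + 4 * k" "i mod 4 = s mod 4 \<or> i mod 4 = (s + 1) mod 4"
  shows "i \<in> domino_run n s k"
proof -
  obtain d where i: "i = s + d" using assms(2) le_iff_add by blast
  have "d mod 4 < 2" using i assms(4) by (rule mod_4_diff_lt_2)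
  moreover have "d div 4 < k" using assms(3) unfolding i by linarith
  moreover have "i = s + 4 * (d div 4) + d mod 4" unfolding i by simp
  ultimately show ?thesis
    using domino_run_memI[of "d div 4" k "d mod 4" s n] assms(1) by simp
qed

lemma has_perfect_matching_domino_run:
  assumes "2 \<le> n" "4 * k \<le> n + 2"
  shows "has_perfect_matching (cycle_adj n) (domino_run n s k)"
  unfolding has_perfect_matching_def
proof (intro exI[of _ "(\<lambda>t. domino n (s + 4 * t)) ` {..<k}"] conjI ballI impI)
  fix e assume "e \<in> (\<lambda>t. domino n (s + 4 * t)) ` {..<k}"
  then obtain t where t: "t < k" "e = domino n (s + 4 * t)" by auto
  have "(s + 4 * t) mod n \<noteq> Suc (s + 4 * t) mod n"
    using assms(1) by (intro mod_neq_if_close) auto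
  with t assms(1) show "\<exists>u v. e = {u, v} \<and> u \<in> domino_run n s k \<and> v \<in> domino_run n s k
      \<and> u \<noteq> v \<and> cycle_adj n u v"
    unfolding domino_run_def domino_def by (blast intro: cycle_adj_mod_Suc)
next
  fix e1 e2
  assume "e1 \<in> (\<lambda>t. domino n (s + 4 * t)) ` {..<k}" "e2 \<in> (\<lambda>t. domino n (s + 4 * t)) ` {..<k}"
    and "e1 \<noteq> e2"
  then obtain t1 t2 where t: "t1 < k" "t2 < k" "t1 \<noteq> t2"
    and e: "e1 = domino n (s + 4 * t1)" "e2 = domino n (s + 4 * t2)" by auto
  have "x mod n \<noteq> y mod n"
    if "x \<in> {s + 4 * t1, Suc (s + 4 * t1)}" "y \<in> {s + 4 * t2, Suc (s + 4 * t2)}" for x y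
  proof (cases "t1 < t2")
    case True
    with that t assms(2) have "x < y" "y < x + n" by auto
    then show ?thesis by (rule mod_neq_if_close)
  next
    case False
    with that t assms(2) have "y < x" "x < y + n" by auto
    then show ?thesis using mod_neq_if_close by metis
  qed
  then show "e1 \<inter> e2 = {}" unfolding e domino_def by blast
qed (simp add: domino_run_def)

lemma domino_run_1_dominates:
  assumes "i < 4 * a + 2"
  shows "dominated_by (cycle_adj (4 * a + 2)) (domino_run (4 * a + 2) 1 (a + 1)) i"
proof -
  let ?A = "domino_run (4 * a + 2) 1 (a + 1)"
  show ?thesis
  proof (cases i rule: mod_4_cases)
    case (1 q)
    show ?thesis
    proof (cases "q = 0")
      case True
      have "(1 + 4 * a + 1) mod (4 * a + 2) \<in> ?A" by (rule domino_run_memI) auto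
      with 1 True show ?thesis by (simp add: dominated_by_self)
    next
      case False
      have "Suc i < 4 * a + 2" using 1 assms False by presburger
      then have "Suc i \<in> ?A" "cycle_adj (4 * a + 2) i (Suc i)"
        using 1 by (auto intro: domino_run_memI_mod cycle_adj_Suc)
      then show ?thesis by (intro dominated_by_neighbour)
    qed
  next
    case (2 q)
    then have "i \<in> ?A" using assms by (intro domino_run_memI_mod) auto
    then show ?thesis by (rule dominated_by_self)
  next
    case (3 q)
    then have "i \<in> ?A" using assms by (intro domino_run_memI_mod) (auto simp: mod_Suc)
    then show ?thesis by (rule dominated_by_self)
  next
    case (4 q)
    then have "4 * q + 2 \<in> ?A" using assms by (intro domino_run_memI_mod) (auto simp: mod_Suc)
    moreover have "cycle_adj (4 * a + 2) i (4 * q + 2)"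
      using 4 assms cycle_adj_Suc_left[of "4 * q + 2" "4 * a + 2"] by (simp add: numeral_3_eq_3)
    ultimately show ?thesis by (intro dominated_by_neighbour)
  qed
qed

lemma domino_runs_1_3_cover:
  assumes "i < 4 * a + 2"
  shows "i \<in> domino_run (4 * a + 2) 1 (a + 1) \<or> i \<in> domino_run (4 * a + 2) 3 a"
proof (cases i rule: mod_4_cases)
  case (1 q)
  show ?thesis
  proof (cases "q = 0")
    case True
    have "(1 + 4 * a + 1) mod (4 * a + 2) \<in> domino_run (4 * a + 2) 1 (a + 1)"
      by (rule domino_run_memI) auto
    with 1 True show ?thesis by simp
  next
    case False
    have "i \<le> 4 * a" using 1 assms by presburger
    with 1 False have "i \<in> domino_run (4 * a + 2) 3 a" by (intro domino_run_memI_mod) auto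
    then show ?thesis ..
  qed
next
  case (2 q)
  with assms have "i \<in> domino_run (4 * a + 2) 1 (a + 1)" by (intro domino_run_memI_mod) auto
  then show ?thesis ..
next
  case (3 q)
  with assms have "i \<in> domino_run (4 * a + 2) 1 (a + 1)" by (intro domino_run_memI_mod) (auto simp: mod_Suc)
  then show ?thesis ..
next
  case (4 q)
  with assms have "i \<in> domino_run (4 * a + 2) 3 a" by (intro domino_run_memI_mod) auto
  then show ?thesis ..
qed

lemma domino_run_3_dominates_upper_rows:
  assumes "2 \<le> i" "i < 4 * a + 2"
  shows "dominated_by (cycle_adj (4 * a + 2)) (domino_run (4 * a + 2) 3 a) i"
proof -
  let ?B = "domino_run (4 * a + 2) 3 a"
  show ?thesis
  proof (cases i rule: mod_4_cases)
    case (1 q)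
    have "i \<le> 4 * a" using 1 assms by presburger
    with 1 assms have "i \<in> ?B" by (intro domino_run_memI_mod) auto
    then show ?thesis by (rule dominated_by_self)
  next
    case (2 q)
    with assms have "4 * q \<in> ?B" by (intro domino_run_memI_mod) auto
    moreover have "cycle_adj (4 * a + 2) i (4 * q)"
      using 2 assms cycle_adj_Suc_left[of "4 * q" "4 * a + 2"] by simp
    ultimately show ?thesis by (intro dominated_by_neighbour)
  next
    case (3 q)
    have "Suc i < 4 * a + 2" using 3 assms by presburger
    with 3 have "Suc i \<in> ?B" by (intro domino_run_memI_mod) (auto simp: mod_Suc)
    moreover have "cycle_adj (4 * a + 2) i (Suc i)" using \<open>Suc i < 4 * a + 2\<close> by (rule cycle_adj_Suc)
    ultimately show ?thesis by (intro dominated_by_neighbour)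
  next
    case (4 q)
    with assms have "i \<in> ?B" by (intro domino_run_memI_mod) auto
    then show ?thesis by (rule dominated_by_self)
  qed
qed

lemma domino_run_0_first_rows: "2 \<le> n \<Longrightarrow> 0 < k \<Longrightarrow> i < 2 \<Longrightarrow> i \<in> domino_run n 0 k"
  by (rule domino_run_memI_mod) auto

lemma domino_run_0_or_3_dominates:
  assumes "0 < a" "i < 4 * a + 2"
  shows "dominated_by (cycle_adj (4 * a + 2)) (domino_run (4 * a + 2) 0 a) i
    \<or> i \<in> domino_run (4 * a + 2) 3 a"
proof -
  let ?R = "domino_run (4 * a + 2) 0 a"
  show ?thesis
  proof (cases i rule: mod_4_cases)
    case (1 q)
    show ?thesis
    proof (cases "q = a")
      case True
      with 1 assms have "i \<in> domino_run (4 * a + 2) 3 a" by (intro domino_run_memI_mod) auto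
      then show ?thesis ..
    next
      case False
      with 1 assms have "i \<in> ?R" by (intro domino_run_memI_mod) auto
      then show ?thesis by (blast intro: dominated_by_self)
    qed
  next
    case (2 q)
    show ?thesis
    proof (cases "q = a")
      case True
      have "0 \<in> ?R" using assms(1) by (intro domino_run_0_first_rows) auto
      moreover have "cycle_adj (4 * a + 2) i 0" using 2 True cycle_adj_last_first[of "4 * a + 2"] by simp
      ultimately show ?thesis by (blast intro: dominated_by_neighbour)
    next
      case False
      with 2 assms have "i \<in> ?R" by (intro domino_run_memI_mod) auto
      then show ?thesis by (blast intro: dominated_by_self)
    qed
  next
    case (3 q)
    with assms have "4 * q + 1 \<in> ?R" by (intro domino_run_memI_mod) auto
    moreover have "cycle_adj (4 * a + 2) i (4 * q + 1)"
      using 3 assms cycle_adj_Suc_left[of "4 * q + 1" "4 * a + 2"] by simp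
    ultimately show ?thesis by (blast intro: dominated_by_neighbour)
  next
    case (4 q)
    with assms have "i \<in> domino_run (4 * a + 2) 3 a" by (intro domino_run_memI_mod) auto
    then show ?thesis ..
  qed
qed

definition dominoes :: "nat \<Rightarrow> nat \<Rightarrow> nat" where
  "dominoes a j =
     (if j mod 4 = 1 then a + 1 else if j mod 4 = 3 then a else if j mod 4 = 0 \<and> j \<noteq> 0 then 1 else 0)"

definition column_pattern :: "nat \<Rightarrow> nat \<Rightarrow> nat \<Rightarrow> nat set" where
  "column_pattern a b j =
     (if j = 4 * b then domino_run (4 * a + 2) 0 a
      else if j = 4 * b + 1 then domino_run (4 * a + 2) 3 a
      else domino_run (4 * a + 2) (j mod 4) (dominoes a j))"

lemma column_pattern_4q1: "q < b \<Longrightarrow> column_pattern a b (4 * q + 1) = domino_run (4 * a + 2) 1 (a + 1)"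
  unfolding column_pattern_def dominoes_def by simp

lemma column_pattern_4q3: "q < b \<Longrightarrow> column_pattern a b (4 * q + 3) = domino_run (4 * a + 2) 3 a"
  unfolding column_pattern_def dominoes_def by simp

lemma column_pattern_4b1: "column_pattern a b (4 * b + 1) = domino_run (4 * a + 2) 3 a"
  unfolding column_pattern_def by simp

lemma column_pattern_4q:
  "0 < q \<Longrightarrow> q < b \<Longrightarrow> column_pattern a b (4 * q) = domino_run (4 * a + 2) 0 1"
  unfolding column_pattern_def dominoes_def by simp

lemma column_pattern_4b: "column_pattern a b (4 * b) = domino_run (4 * a + 2) 0 a"
  unfolding column_pattern_def by simp

definition grid_dominated :: "nat \<Rightarrow> nat \<Rightarrow> nat \<Rightarrow> nat \<Rightarrow> bool" where
  "grid_dominated a b i j \<longleftrightarrow> dominated_by (cycle_adj (4 * a + 2)) (column_pattern a b j) i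
     \<or> (\<exists>j' \<in> {0..<4 * b + 2}. cycle_adj (4 * b + 2) j j' \<and> i \<in> column_pattern a b j')"

lemma grid_dominated_ownI: "dominated_by (cycle_adj (4 * a + 2)) (column_pattern a b j) i \<Longrightarrow> grid_dominated a b i j"
  unfolding grid_dominated_def by blast

lemma grid_dominated_nextI:
  "j' < 4 * b + 2 \<Longrightarrow> cycle_adj (4 * b + 2) j j' \<Longrightarrow> i \<in> column_pattern a b j' \<Longrightarrow> grid_dominated a b i j"
  unfolding grid_dominated_def by auto

lemma grid_dominated_between_runs_1_3:
  assumes "i < 4 * a + 2"
    and "jA < 4 * b + 2" "cycle_adj (4 * b + 2) j jA" "column_pattern a b jA = domino_run (4 * a + 2) 1 (a + 1)"
    and "jB < 4 * b + 2" "cycle_adj (4 * b + 2) j jB" "column_pattern a b jB = domino_run (4 * a + 2) 3 a"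
  shows "grid_dominated a b i j"
  using domino_runs_1_3_cover[OF assms(1)] assms(2-7) by (auto intro: grid_dominated_nextI)

lemma grid_dominated_run_3:
  assumes "i < 4 * a + 2" "column_pattern a b j = domino_run (4 * a + 2) 3 a"
    and "i < 2 \<Longrightarrow> grid_dominated a b i j"
  shows "grid_dominated a b i j"
  using assms domino_run_3_dominates_upper_rows[OF _ assms(1)]
  by (cases "2 \<le> i") (auto intro: grid_dominated_ownI)

lemma grid_dominated_4q:
  assumes "0 < a" "0 < b" "i < 4 * a + 2" "q \<le> b"
  shows "grid_dominated a b i (4 * q)"
proof -
  consider "q = 0" | q' where "q = Suc q'" "q < b" | "q = b" using assms(4) by (cases q) (auto simp: le_less)
  then show ?thesis
  proof cases
    case 1
    then show ?thesis
      using assms(2,3) cycle_adj_Suc[of 0 "4 * b + 2"] cycle_adj_sym[OF cycle_adj_last_first, of "4 * b + 2"]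
        column_pattern_4q1[of 0 b a] column_pattern_4b1[of a b]
      by (intro grid_dominated_between_runs_1_3[where jA = 1 and jB = "4 * b + 1"]) simp_all
  next
    case (2 q')
    have "4 * q = Suc (4 * q' + 3)" using 2 by simp
    then have "cycle_adj (4 * b + 2) (4 * q) (4 * q' + 3)"
      using 2 cycle_adj_Suc_left[of "4 * q' + 3" "4 * b + 2"] by simp
    moreover have "cycle_adj (4 * b + 2) (4 * q) (4 * q + 1)"
      using 2 cycle_adj_Suc[of "4 * q" "4 * b + 2"] by simp
    moreover have "column_pattern a b (4 * q + 1) = domino_run (4 * a + 2) 1 (a + 1)"
      using 2 by (intro column_pattern_4q1) simp
    moreover have "column_pattern a b (4 * q' + 3) = domino_run (4 * a + 2) 3 a"
      using 2 by (intro column_pattern_4q3) simp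
    moreover have "4 * q + 1 < 4 * b + 2" "4 * q' + 3 < 4 * b + 2" using 2 by simp_all
    ultimately show ?thesis using assms(3) by (intro grid_dominated_between_runs_1_3)
  next
    case 3
    have "cycle_adj (4 * b + 2) (4 * b) (4 * b + 1)" using cycle_adj_Suc[of "4 * b" "4 * b + 2"] by simp
    then show ?thesis
      using 3 domino_run_0_or_3_dominates[OF assms(1,3)] column_pattern_4b1[of a b]
      by (auto simp: column_pattern_4b intro: grid_dominated_ownI grid_dominated_nextI)
  qed
qed

lemma grid_dominated_4q1:
  assumes "0 < a" "i < 4 * a + 2" "q \<le> b"
  shows "grid_dominated a b i (4 * q + 1)"
proof (cases "q = b")
  case True
  show ?thesis
  proof (rule grid_dominated_run_3)
    show "column_pattern a b (4 * q + 1) = domino_run (4 * a + 2) 3 a"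
      using True column_pattern_4b1 by simp
    assume "i < 2"
    then have "i \<in> column_pattern a b (4 * b)"
      using assms(1) by (simp add: column_pattern_4b domino_run_0_first_rows)
    moreover have "cycle_adj (4 * b + 2) (4 * q + 1) (4 * b)"
      using True cycle_adj_Suc_left[of "4 * b"] by simp
    ultimately show "grid_dominated a b i (4 * q + 1)" by (intro grid_dominated_nextI) simp_all
  qed fact
next
  case False
  with assms(3) have "column_pattern a b (4 * q + 1) = domino_run (4 * a + 2) 1 (a + 1)"
    by (intro column_pattern_4q1) simp
  then show ?thesis using domino_run_1_dominates[OF assms(2)] by (simp add: grid_dominated_ownI)
qed

lemma grid_dominated_4q2:
  assumes "i < 4 * a + 2" "q < b"
  shows "grid_dominated a b i (4 * q + 2)"
  using assms cycle_adj_Suc_left[of "4 * q + 1" "4 * b + 2"] cycle_adj_Suc[of "4 * q + 2" "4 * b + 2"]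
    column_pattern_4q1[OF assms(2), of a] column_pattern_4q3[OF assms(2), of a]
  by (intro grid_dominated_between_runs_1_3[where jA = "4 * q + 1" and jB = "4 * q + 3"])
    (simp_all add: numeral_3_eq_3)

lemma grid_dominated_4q3:
  assumes "0 < a" "i < 4 * a + 2" "q < b"
  shows "grid_dominated a b i (4 * q + 3)"
proof (rule grid_dominated_run_3)
  show "column_pattern a b (4 * q + 3) = domino_run (4 * a + 2) 3 a"
    using assms(3) by (rule column_pattern_4q3)
  assume "i < 2"
  have "i \<in> column_pattern a b (4 * Suc q)"
  proof (cases "Suc q = b")
    case True
    then show ?thesis using \<open>i < 2\<close> assms(1) by (simp add: column_pattern_4b domino_run_0_first_rows)
  next
    case False
    with assms(3) have "column_pattern a b (4 * Suc q) = domino_run (4 * a + 2) 0 1"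
      by (intro column_pattern_4q) simp_all
    then show ?thesis using \<open>i < 2\<close> by (simp add: domino_run_0_first_rows)
  qed
  moreover have "cycle_adj (4 * b + 2) (4 * q + 3) (4 * Suc q)"
    using assms(3) cycle_adj_Suc[of "4 * q + 3" "4 * b + 2"] by simp
  ultimately show "grid_dominated a b i (4 * q + 3)"
    using assms(3) by (intro grid_dominated_nextI) simp_all
qed fact

lemma grid_dominated_all:
  assumes "0 < a" "0 < b" "i < 4 * a + 2" "j < 4 * b + 2"
  shows "grid_dominated a b i j"
proof (cases j rule: mod_4_cases)
  case (1 q)
  with assms(4) have "q \<le> b" by presburger
  from grid_dominated_4q[OF assms(1-3) this] 1 show ?thesis by simp
next
  case (2 q)
  with assms(4) have "q \<le> b" by presburger
  from grid_dominated_4q1[OF assms(1,3) this] 2 show ?thesis by simp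
next
  case (3 q)
  with assms(4) have "q < b" by presburger
  from grid_dominated_4q2[OF assms(3) this] 3 show ?thesis by simp
next
  case (4 q)
  with assms(4) have "q < b" by presburger
  from grid_dominated_4q3[OF assms(1,3) this] 4 show ?thesis by simp
qed

lemma has_perfect_matching_column_pattern:
  "has_perfect_matching (cycle_adj (4 * a + 2)) (column_pattern a b j)"
  unfolding column_pattern_def dominoes_def
  by (auto intro: has_perfect_matching_domino_run)

lemma paired_dominating_column_patterns:
  assumes "0 < a" "0 < b"
  shows "paired_dominating ({0..<4 * a + 2} \<times> {0..<4 * b + 2})
    (cart_adj (cycle_adj (4 * a + 2)) (cycle_adj (4 * b + 2)))
    (column_set {0..<4 * b + 2} (column_pattern a b))"
  unfolding paired_dominating_def
proof
  have "column_pattern a b j \<subseteq> {0..<4 * a + 2}" for j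
    unfolding column_pattern_def by (simp add: domino_run_subset)
  then have "column_set {0..<4 * b + 2} (column_pattern a b) \<subseteq> {0..<4 * a + 2} \<times> {0..<4 * b + 2}"
    unfolding column_set_def by blast
  then show "dominating ({0..<4 * a + 2} \<times> {0..<4 * b + 2})
    (cart_adj (cycle_adj (4 * a + 2)) (cycle_adj (4 * b + 2)))
    (column_set {0..<4 * b + 2} (column_pattern a b))"
  proof (rule dominatingI)
    fix v assume "v \<in> {0..<4 * a + 2} \<times> {0..<4 * b + 2}"
    then obtain i j where v: "v = (i, j)" and ij: "i < 4 * a + 2" "j < 4 * b + 2" by auto
    show "dominated_by (cart_adj (cycle_adj (4 * a + 2)) (cycle_adj (4 * b + 2)))
      (column_set {0..<4 * b + 2} (column_pattern a b)) v"
      unfolding v using ij grid_dominated_all[OF assms ij]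
      by (intro dominated_by_column_set) (auto simp: grid_dominated_def)
  qed
  show "has_perfect_matching (cart_adj (cycle_adj (4 * a + 2)) (cycle_adj (4 * b + 2)))
    (column_set {0..<4 * b + 2} (column_pattern a b))"
    by (intro has_perfect_matching_column_set has_perfect_matching_column_pattern)
qed

text \<open>Truncated subtraction makes the formula hold also for $b = 0$.\<close>

lemma sum_dominoes: "(\<Sum>j<4 * b. dominoes a j) = (2 * a + 2) * b - 1"
proof (induction b)
  case 0
  then show ?case by simp
next
  case (Suc b)
  have "4 * Suc b = Suc (Suc (Suc (Suc (4 * b))))" by simp
  then have "(\<Sum>j<4 * Suc b. dominoes a j) = (\<Sum>j<4 * b. dominoes a j) + dominoes a (4 * b)
      + dominoes a (Suc (4 * b)) + dominoes a (Suc (Suc (4 * b))) + dominoes a (Suc (Suc (Suc (4 * b))))"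
    by (simp only: sum.lessThan_Suc add.assoc)
  moreover have "dominoes a (4 * b) = (if b = 0 then 0 else 1)" "dominoes a (Suc (4 * b)) = a + 1"
    "dominoes a (Suc (Suc (4 * b))) = 0" "dominoes a (Suc (Suc (Suc (4 * b)))) = a"
    unfolding dominoes_def by (simp_all add: mod_Suc)
  ultimately show ?case
    unfolding Suc.IH by (cases b) (simp_all add: algebra_simps)
qed

lemma card_column_patterns_le:
  assumes "0 < b"
  shows "card (column_set {0..<4 * b + 2} (column_pattern a b)) \<le> 4 * a * b + 4 * a + 4 * b - 2"
proof -
  have interior: "card (column_pattern a b j) \<le> 2 * dominoes a j" if "j < 4 * b" for j
    using that card_domino_run_le unfolding column_pattern_def by simp
  have "card (column_set {0..<4 * b + 2} (column_pattern a b))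
      \<le> (\<Sum>j<4 * b + 2. card (column_pattern a b j))"
    using card_column_set_le[of "{0..<4 * b + 2}"] by (simp add: atLeast0LessThan)
  also have "\<dots> = (\<Sum>j<4 * b. card (column_pattern a b j))
      + card (column_pattern a b (4 * b)) + card (column_pattern a b (4 * b + 1))"
    by (simp add: numeral_2_eq_2)
  also have "\<dots> \<le> 2 * (\<Sum>j<4 * b. dominoes a j) + 2 * a + 2 * a"
  proof (intro add_mono)
    show "(\<Sum>j<4 * b. card (column_pattern a b j)) \<le> 2 * (\<Sum>j<4 * b. dominoes a j)"
      unfolding sum_distrib_left by (rule sum_mono) (simp add: interior)
    show "card (column_pattern a b (4 * b)) \<le> 2 * a" "card (column_pattern a b (4 * b + 1)) \<le> 2 * a"
      by (simp_all add: column_pattern_def card_domino_run_le)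
  qed
  also have "\<dots> = 4 * a * b + 4 * a + 4 * b - 2"
    using assms unfolding sum_dominoes by (cases b) (simp_all add: algebra_simps)
  finally show ?thesis .
qed

theorem theorem5p5:
  fixes n m :: nat
  assumes "n \<ge> 5" and "m \<ge> 5" and "m mod 4 = 2" and "n mod 4 = 2"
  shows "real (gamma_p ({0..<n} \<times> {0..<m}) (cart_adj (cycle_adj n) (cycle_adj m)))
           \<le> real ((n + 2) * (m + 2)) / 4 - 6"
proof -
  define a where "a = n div 4"
  define b where "b = m div 4"
  have n: "n = 4 * a + 2" and m: "m = 4 * b + 2"
    using assms(3,4) unfolding a_def b_def by presburger+
  have "0 < a" "0 < b" using assms(1,2) n m by auto
  then have "gamma_p ({0..<n} \<times> {0..<m}) (cart_adj (cycle_adj n) (cycle_adj m))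
      \<le> 4 * a * b + 4 * a + 4 * b - 2"
    unfolding n m
    using gamma_p_le_card[OF paired_dominating_column_patterns] card_column_patterns_le
    by (meson le_trans)
  moreover have "real (4 * a * b + 4 * a + 4 * b - 2) = real ((n + 2) * (m + 2)) / 4 - 6"
    using \<open>0 < a\<close> unfolding n m by (simp add: of_nat_diff algebra_simps)
  ultimately show ?thesis by (metis of_nat_le_iff)
qed

end
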